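(* Let $\vec B=(b_0,\dots,b_{N-1})$ be a binary digit vector of length $N$ (scale factor $N$). Then $\vec B$ is uniquely determined by the values $\{F_{\vec B}(k/N)\}_{k=1}^{N-1}$; i.e., if $\vec B,\vec C$ are binary digit vectors both of length $N$ with $F_{\vec B}(k/N)=F_{\vec C}(k/N)$ for $k=1,\dots,N-1$, then $\vec B=\vec C$.
   Context: A binary digit vector of length (scale factor) $N\ge3$ is $\vec B=(b_0,\dots,b_{N-1})\in\{0,1\}^N$ with $2\le\|\vec B\|:=\sum_i b_i\le N-1$; its digit set is $D=\{i:b_i=1\}$. With $\phi_d(x)=(x+d)/N$ for $d\in D$, let $\mu_{\vec B}$ be the unique Borel probability measure with $\mu_{\vec B}=\frac{1}{\|\vec B\|}\sum_{d\in D}\mu_{\vec B}\circ\phi_d^{-1}$, supported on the attractor $C_{\vec B}\subset[0,1]$. The CDF is $F_{\vec B}(x)=\mu_{\vec B}([0,x])$, $x\in[0,1]$. *)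

theory Defs
  imports "HOL-Probability.Probability"
begin

definition binary_digit_vector :: "nat \<Rightarrow> nat list \<Rightarrow> bool" where
  "binary_digit_vector N B \<longleftrightarrow> N \<ge> 3 \<and> length B = N \<and> set B \<subseteq> {0, 1}
     \<and> 2 \<le> sum_list B \<and> sum_list B \<le> N - 1"

definition digit_set :: "nat list \<Rightarrow> nat set" where
  "digit_set B = {i. i < length B \<and> B ! i = 1}"

definition ifs_map :: "nat list \<Rightarrow> nat \<Rightarrow> real \<Rightarrow> real" where
  "ifs_map B d x = (x + real d) / real (length B)"

definition self_similar_measure :: "nat list \<Rightarrow> real measure \<Rightarrow> bool" where
  "self_similar_measure B M \<longleftrightarrow> sets M = sets borel \<and> prob_space M \<and>
     (\<forall>A \<in> sets borel. emeasure M A =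
        (\<Sum>d\<in>digit_set B. emeasure M (ifs_map B d -` A)) / of_nat (sum_list B))"

definition mu_B :: "nat list \<Rightarrow> real measure" where
  "mu_B B = (THE M. self_similar_measure B M)"

definition cdf_B :: "nat list \<Rightarrow> real \<Rightarrow> real" where
  "cdf_B B x = measure (mu_B B) {0..x}"

end

theory Submission
  imports Defs
begin

(* Self-similarity turns into the functional equation F x = (1/\<parallel>B\<parallel>) \<Sum>d\<in>D. F (N x - d) for the
   CDF F of any self-similar measure.  Such a measure lives on [0,1] and has no atom at 0, so F
   vanishes on (-\<infinity>,0] and is 1 on [1,\<infinity>); at x = k/N the equation therefore gives
   F (k/N) = (b_0 + ... + b_(k-1)) / \<parallel>B\<parallel>.  The given values thus fix the prefix sums of B up to
   the factor \<parallel>B\<parallel>, hence each digit up to that factor, and 0/1 digits force the factor to be 1.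

   The measure mu_B exists as the law of \<Sum>i. w_i / N^(i+1) for i.i.d. digits w_i uniform on D.
   It is unique because the difference G of two such CDFs vanishes off [0,1), so in the
   functional equation for G at most one term survives and sup |G| \<le> sup |G| / \<parallel>B\<parallel>. *)

lemma sum_list_take_Suc:
  fixes xs :: "nat list"
  assumes "k < length xs"
  shows "sum_list (take (Suc k) xs) = sum_list (take k xs) + xs ! k"
  using assms by (simp add: take_Suc_conv_app_nth)

lemma list_eq_if_prefix_sums_proportional:
  fixes B C :: "nat list"
  assumes len: "length B = length C"
    and B01: "set B \<subseteq> {0, 1}" and C01: "set C \<subseteq> {0, 1}"
    and pos: "0 < sum_list B" "0 < sum_list C"
    and prefix: "\<And>k. k \<le> length B \<Longrightarrow>
      sum_list (take k B) * sum_list C = sum_list (take k C) * sum_list B"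
  shows "B = C"
proof -
  have digit: "B ! k * sum_list C = C ! k * sum_list B" if k: "k < length B" for k
    using prefix[of k] prefix[of "Suc k"] k len by (simp add: sum_list_take_Suc add_mult_distrib)
  obtain k where k: "k < length B" "B ! k = 1"
    using pos(1) B01 by (metis elem_le_sum_list in_set_conv_nth insert_iff le_zero_eq
        not_gr0 sum_list_eq_0_iff subsetD singletonD)
  have "C ! k \<in> {0, 1}"
    using C01 k(1) len by (metis nth_mem subsetD)
  then have sums: "sum_list C = sum_list B"
    using digit[OF k(1)] k(2) pos by auto
  show ?thesis
  proof (rule nth_equalityI)
    fix i assume "i < length B"
    then show "B ! i = C ! i"
      using digit[of i] sums pos(1) by (metis mult_cancel2 not_gr0)
  qed (rule len)
qed

lemma nonpos_if_le_dilation_tendsto_0: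
  fixes f :: "real \<Rightarrow> real"
  assumes c: "1 < c" and a: "0 < a"
    and dilation: "\<And>x. 0 < x \<Longrightarrow> f x \<le> f (c * x)" and lim: "(f \<longlongrightarrow> 0) at_top"
  shows "f a \<le> 0"
proof -
  have le: "f a \<le> f (c ^ k * a)" for k
  proof (induction k)
    case (Suc k)
    have "f (c ^ k * a) \<le> f (c * (c ^ k * a))"
      using c a by (intro dilation) simp
    with Suc show ?case by (simp add: mult.assoc)
  qed simp
  have "filterlim (\<lambda>k. c ^ k) at_top sequentially"
    using c by (simp add: Archimedean_eventually_pow filterlim_at_top_dense)
  then have "filterlim (\<lambda>k. c ^ k * a) at_top sequentially"
    using a by (intro filterlim_at_top_mult_tendsto_pos[OF tendsto_const]) auto
  from filterlim_compose[OF lim this] show ?thesis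
    using le by (intro LIMSEQ_le_const) auto
qed

lemma nonneg_le_divide_imp_0:
  fixes c n :: real
  assumes "0 \<le> c" "1 < n" "c \<le> c / n"
  shows "c = 0"
proof -
  have "c * (n - 1) \<le> 0" using assms by (simp add: le_divide_eq algebra_simps)
  then show ?thesis using assms by (smt (verit) mult_pos_pos)
qed

(* Digits are clipped to N - 1 so that the series converges for every stream; on streams of
   digits below N, which is all that matters below, the clipping does nothing. *)
definition digit_expansion :: "nat \<Rightarrow> nat stream \<Rightarrow> real" where
  "digit_expansion N \<omega> = (\<Sum>i. real (min (\<omega> !! i) (N - 1)) / real N ^ Suc i)"

lemma summable_digit_expansion:
  assumes N: "2 \<le> N"
  shows "summable (\<lambda>i. real (min (\<omega> !! i) (N - 1)) / real N ^ Suc i)"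
proof (rule summable_comparison_test'[where g="\<lambda>i. inverse (real N) ^ i"])
  show "summable (\<lambda>i. inverse (real N) ^ i)"
    using N by (intro summable_geometric) (simp add: inverse_less_1_iff)
  fix i
  have "real (min (\<omega> !! i) (N - 1)) / real N ^ Suc i \<le> real N / real N ^ Suc i"
    by (intro divide_right_mono) auto
  also have "\<dots> = inverse (real N) ^ i"
    using N by (simp add: power_inverse field_simps)
  finally show "norm (real (min (\<omega> !! i) (N - 1)) / real N ^ Suc i) \<le> inverse (real N) ^ i"
    by simp
qed

lemma digit_expansion_Stream:
  assumes N: "2 \<le> N"
  shows "digit_expansion N (x ## \<omega>) = (real (min x (N - 1)) + digit_expansion N \<omega>) / real N"
proof -
  have "digit_expansion N (x ## \<omega>)
      = real (min x (N - 1)) / real N + (\<Sum>i. real (min (\<omega> !! i) (N - 1)) / real N ^ Suc (Suc i))"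
    unfolding digit_expansion_def
    using suminf_split_head[OF summable_digit_expansion[OF N, of "x ## \<omega>"]] by simp
  also have "(\<Sum>i. real (min (\<omega> !! i) (N - 1)) / real N ^ Suc (Suc i)) = digit_expansion N \<omega> / real N"
    unfolding digit_expansion_def
    by (subst suminf_divide[OF summable_digit_expansion[OF N], symmetric]) (simp add: field_simps)
  finally show ?thesis
    by (simp add: add_divide_distrib)
qed

lemma measurable_digit_expansion [measurable]:
  "digit_expansion N \<in> borel_measurable (stream_space (measure_pmf p))"
  unfolding digit_expansion_def by measurable

lemma self_similar_distr_digit_expansion:
  fixes D :: "nat set"
  assumes N: "2 \<le> N" and D: "finite D" "D \<noteq> {}" "D \<subseteq> {..<N}" and A: "A \<in> sets borel"
  defines "\<mu> \<equiv> distr (stream_space (measure_pmf (pmf_of_set D))) borel (digit_expansion N)"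
  shows "emeasure \<mu> A = (\<Sum>d\<in>D. emeasure \<mu> ((\<lambda>x. (x + d) / N) -` A)) / card D"
proof -
  define P where "P = measure_pmf (pmf_of_set D)"
  define S where "S = stream_space P"
  interpret P: prob_space P unfolding P_def by (rule prob_space_measure_pmf)
  have emeasure_\<mu>: "emeasure \<mu> A' = (\<integral>\<^sup>+\<omega>. indicator A' (digit_expansion N \<omega>) \<partial>S)"
    if "A' \<in> sets borel" for A'
  proof -
    have "emeasure \<mu> A' = (\<integral>\<^sup>+y. indicator A' y \<partial>\<mu>)"
      using that by (simp add: \<mu>_def)
    also have "\<dots> = (\<integral>\<^sup>+\<omega>. indicator A' (digit_expansion N \<omega>) \<partial>S)"
      unfolding \<mu>_def S_def P_def using that by (subst nn_integral_distr) auto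
    finally show ?thesis .
  qed
  have [measurable]: "A \<in> sets borel" by (rule A)
  have "emeasure \<mu> A = (\<integral>\<^sup>+d. (\<integral>\<^sup>+\<omega>. indicator A (digit_expansion N (d ## \<omega>)) \<partial>S) \<partial>P)"
    unfolding emeasure_\<mu>[OF A] S_def by (rule P.nn_integral_stream_space) (unfold P_def, measurable)
  also have "\<dots> = (\<Sum>d\<in>D. (\<integral>\<^sup>+\<omega>. indicator A (digit_expansion N (d ## \<omega>)) \<partial>S)) / card D"
    unfolding P_def by (rule nn_integral_pmf_of_set[OF D(2,1)])
  also have "(\<Sum>d\<in>D. (\<integral>\<^sup>+\<omega>. indicator A (digit_expansion N (d ## \<omega>)) \<partial>S))
      = (\<Sum>d\<in>D. emeasure \<mu> ((\<lambda>x. (x + d) / N) -` A))"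
  proof (rule sum.cong[OF refl])
    fix d assume "d \<in> D"
    then have "min d (N - 1) = d" using D(3) by auto
    then have "indicator A (digit_expansion N (d ## \<omega>))
        = (indicator ((\<lambda>x. (x + d) / N) -` A) (digit_expansion N \<omega>) :: ennreal)" for \<omega>
      by (simp add: digit_expansion_Stream[OF N] add.commute indicator_def)
    then show "(\<integral>\<^sup>+\<omega>. indicator A (digit_expansion N (d ## \<omega>)) \<partial>S) = emeasure \<mu> ((\<lambda>x. (x + d) / N) -` A)"
      by (simp add: emeasure_\<mu> measurable_sets_borel[OF _ A])
  qed
  finally show ?thesis .
qed

lemma (in real_distribution) tendsto_measure_outside_widened_unit_interval:
  "((\<lambda>t. measure M (- {-t..1 + t})) \<longlongrightarrow> 0) at_top"
proof (rule tendsto_sandwich[where f="\<lambda>_. 0" and h="\<lambda>t. cdf M (-t) + (1 - cdf M (1 + t))"])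
  have "measure M (- {-t..1 + t}) \<le> cdf M (-t) + (1 - cdf M (1 + t))" for t
  proof -
    have "measure M (- {-t..1 + t}) \<le> measure M {..-t} + measure M {1 + t<..}"
      by (rule order_trans[OF _ measure_subadditive]) (auto intro!: finite_measure_mono)
    also have "measure M {1 + t<..} = 1 - cdf M (1 + t)"
      unfolding cdf_def by (subst prob_compl[symmetric]) (auto intro!: arg_cong[where f="measure M"])
    finally show ?thesis by (simp add: cdf_def)
  qed
  then show "\<forall>\<^sub>F t in at_top. measure M (- {-t..1 + t}) \<le> cdf M (-t) + (1 - cdf M (1 + t))"
    by simp
  have "((\<lambda>t. cdf M (-t)) \<longlongrightarrow> 0) at_top"
    by (rule filterlim_compose[OF cdf_lim_at_bot filterlim_uminus_at_bot_at_top])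
  moreover have "((\<lambda>t. cdf M (1 + t)) \<longlongrightarrow> 1) at_top"
    by (rule filterlim_compose[OF cdf_lim_at_top_prob])
      (intro filterlim_tendsto_add_at_top[OF tendsto_const] filterlim_ident)
  ultimately show "((\<lambda>t. cdf M (-t) + (1 - cdf M (1 + t))) \<longlongrightarrow> 0) at_top"
    by (auto intro!: tendsto_eq_intros)
qed auto

locale digit_ifs =
  fixes B :: "nat list"
  assumes digits_01: "set B \<subseteq> {0, 1}"
    and two_le_sum_list: "2 \<le> sum_list B"
begin

lemma digit_set_less_length: "d \<in> digit_set B \<Longrightarrow> d < length B"
  by (simp add: digit_set_def)

lemma finite_digit_set [simp]: "finite (digit_set B)"
  by (simp add: digit_set_def)

lemma card_digits_below: "card {d \<in> digit_set B. d < k} = sum_list (take k B)"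
proof (induction k)
  case 0
  then show ?case by simp
next
  case (Suc k)
  show ?case
  proof (cases "k < length B")
    case True
    then have "B ! k \<in> {0, 1}" using digits_01 by (metis nth_mem subsetD)
    moreover have "{d \<in> digit_set B. d < Suc k} =
        {d \<in> digit_set B. d < k} \<union> (if B ! k = 1 then {k} else {})"
      using True by (auto simp: digit_set_def less_Suc_eq)
    ultimately show ?thesis using Suc True by (auto simp: sum_list_take_Suc)
  next
    case False
    then have "{d \<in> digit_set B. d < Suc k} = {d \<in> digit_set B. d < k}"
      by (auto simp: digit_set_def)
    then show ?thesis using Suc False by simp
  qed
qed

lemma card_digit_set: "card (digit_set B) = sum_list B"
proof -
  have "{d \<in> digit_set B. d < length B} = digit_set B"
    by (auto simp: digit_set_def)
  then show ?thesis using card_digits_below[of "length B"] by simp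
qed

lemma sum_list_pos: "0 < real (sum_list B)"
  using two_le_sum_list by simp

lemma sum_list_le_length: "sum_list B \<le> length B"
  using digits_01 by (induction B) auto

lemma two_le_length: "2 \<le> length B"
  using two_le_sum_list sum_list_le_length by linarith

lemma length_gt_1: "1 < real (length B)"
  using two_le_length by simp

lemma length_pos: "0 < real (length B)"
  using length_gt_1 by linarith

lemmas divide_length_iffs =
  pos_divide_le_eq[OF length_pos] pos_divide_less_eq[OF length_pos]
  pos_le_divide_eq[OF length_pos] pos_less_divide_eq[OF length_pos]

lemma digit_set_nonempty: "digit_set B \<noteq> {}"
  using card_digit_set two_le_sum_list by (metis card.empty not_numeral_le_zero)

lemma self_similar_bounded_function_eq_0:
  fixes G :: "real \<Rightarrow> real"
  assumes bdd: "bdd_above (range (\<lambda>x. \<bar>G x\<bar>))"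
    and outside: "\<And>y. y \<notin> {0..<1} \<Longrightarrow> G y = 0"
    and self_similar: "\<And>x. G x = (\<Sum>d\<in>digit_set B. G (real (length B) * x - real d)) / sum_list B"
  shows "G x = 0"
proof -
  define S where "S = (SUP x. \<bar>G x\<bar>)"
  have S_nonneg: "0 \<le> S"
    unfolding S_def using bdd by (intro cSUP_upper2[of _ _ 0]) auto
  have "\<bar>G x\<bar> \<le> S / sum_list B" for x
  proof -
    define y where "y d = real (length B) * x - real d" for d
    let ?e = "nat \<lfloor>real (length B) * x\<rfloor>"
    \<comment> \<open>the only digit that can put N x - d into [0,1)\<close>
    have "\<bar>G (y d)\<bar> \<le> (if d = ?e then S else 0)" for d
    proof (cases "y d \<in> {0..<1}")
      case True
      then have "\<lfloor>real (length B) * x\<rfloor> = int d" by (simp add: y_def floor_eq_iff)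
      then show ?thesis using cSUP_upper[OF UNIV_I bdd] by (simp add: S_def)
    qed (simp add: outside S_nonneg)
    then have "\<bar>\<Sum>d\<in>digit_set B. G (y d)\<bar> \<le> (\<Sum>d\<in>digit_set B. if d = ?e then S else 0)"
      by (intro order_trans[OF sum_abs sum_mono])
    also have "\<dots> \<le> S"
      using S_nonneg by simp
    finally show ?thesis
      unfolding self_similar[of x] abs_div_pos[OF sum_list_pos, symmetric] y_def
      by (rule divide_right_mono) simp
  qed
  then have "S \<le> S / sum_list B"
    unfolding S_def by (intro cSUP_least) auto
  then have "S = 0"
    using S_nonneg two_le_sum_list by (intro nonneg_le_divide_imp_0) auto
  then show ?thesis
    using cSUP_upper[OF UNIV_I bdd, of x] by (simp add: S_def)
qed

end

locale self_similar = digit_ifs +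
  fixes M :: "real measure"
  assumes self_similar_M: "self_similar_measure B M"
begin

sublocale real_distribution M
  using self_similar_M
  by (simp add: self_similar_measure_def real_distribution_def real_distribution_axioms_def)

lemma measure_self_similar:
  assumes A: "A \<in> sets borel"
  shows "measure M A = (\<Sum>d\<in>digit_set B. measure M (ifs_map B d -` A)) / sum_list B"
proof -
  have "ennreal (measure M A) = (\<Sum>d\<in>digit_set B. emeasure M (ifs_map B d -` A)) / sum_list B"
    using self_similar_M A by (simp add: self_similar_measure_def emeasure_eq_measure)
  also have "\<dots> = ennreal ((\<Sum>d\<in>digit_set B. measure M (ifs_map B d -` A)) / sum_list B)"
    using two_le_sum_list
    by (simp add: emeasure_eq_measure divide_ennreal ennreal_of_nat_eq_real_of_nat sum_nonneg)
  finally show ?thesis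
    by (subst (asm) ennreal_inj) (auto intro!: divide_nonneg_nonneg sum_nonneg)
qed

lemma cdf_self_similar:
  "cdf M x = (\<Sum>d\<in>digit_set B. cdf M (real (length B) * x - real d)) / sum_list B"
proof -
  have "ifs_map B d -` {..x} = {..real (length B) * x - real d}" for d
    by (auto simp: ifs_map_def divide_length_iffs algebra_simps)
  then show ?thesis
    unfolding cdf_def by (simp add: measure_self_similar)
qed

lemma measure_outside_widened_le_dilated:
  assumes "0 < t"
  shows "measure M (- {-t..1 + t})
    \<le> measure M (- {- (real (length B) * t)..1 + real (length B) * t})"
    (is "_ \<le> ?dilated")
proof -
  have "ifs_map B d -` (- {-t..1 + t}) \<subseteq> - {- (real (length B) * t)..1 + real (length B) * t}"
    if "d \<in> digit_set B" for d
  proof -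
    have "real d + 1 \<le> length B"
      using digit_set_less_length[OF that] by linarith
    then show ?thesis
      using length_gt_1 assms by (auto simp: ifs_map_def divide_length_iffs not_le algebra_simps)
  qed
  then have "(\<Sum>d\<in>digit_set B. measure M (ifs_map B d -` (- {-t..1 + t}))) \<le> sum_list B * ?dilated"
    using sum_mono[of "digit_set B" _ "\<lambda>_. ?dilated"] by (simp add: card_digit_set finite_measure_mono)
  then have "measure M (- {-t..1 + t}) \<le> sum_list B * ?dilated / sum_list B"
    by (subst measure_self_similar) (simp, rule divide_right_mono, simp_all)
  then show ?thesis
    using sum_list_pos by (metis less_irrefl nonzero_mult_div_cancel_left)
qed

lemma measure_outside_widened_unit_interval:
  assumes "0 < a"
  shows "measure M (- {-a..1 + a}) = 0"
  using nonpos_if_le_dilation_tendsto_0[OF length_gt_1 assms measure_outside_widened_le_dilated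
      tendsto_measure_outside_widened_unit_interval]
  by (simp add: measure_le_0_iff)

lemma null_sets_outside_unit_interval: "- {0..1} \<in> null_sets M"
proof -
  have "- {0..1} = (\<Union>k. - {- inverse (Suc k)..1 + inverse (Suc k)})"
  proof (intro equalityI subsetI)
    fix x :: real assume "x \<in> - {0..1}"
    then have "0 < - x \<or> 0 < x - 1" by auto
    then obtain k where "inverse (Suc k) < - x \<or> inverse (Suc k) < x - 1"
      using reals_Archimedean by blast
    then have "x \<in> - {- inverse (Suc k)..1 + inverse (Suc k)}" by auto
    then show "x \<in> (\<Union>k. - {- inverse (Suc k)..1 + inverse (Suc k)})" by blast
  next
    fix x :: real assume "x \<in> (\<Union>k. - {- inverse (Suc k)..1 + inverse (Suc k)})"
    then obtain k where "x \<notin> {- inverse (Suc k)..1 + inverse (Suc k)}" by blast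
    moreover have "0 < inverse (real (Suc k))" by simp
    ultimately show "x \<in> - {0..1}" by (smt (verit) atLeastAtMost_iff ComplI)
  qed
  also have "\<dots> \<in> null_sets M"
    using measure_outside_widened_unit_interval
    by (intro null_sets_UN null_setsI) (auto simp: emeasure_eq_measure)
  finally show ?thesis .
qed

lemma null_sets_disjoint_unit_interval:
  assumes "A \<in> sets borel" "A \<inter> {0..1} = {}"
  shows "A \<in> null_sets M"
proof -
  have "A = A \<inter> - {0..1}" using assms(2) by blast
  also have "\<dots> \<in> null_sets M"
    using null_set_Int1[OF null_sets_outside_unit_interval] assms(1) by simp
  finally show ?thesis .
qed

lemma cdf_neg: "x < 0 \<Longrightarrow> cdf M x = 0"
  unfolding cdf_def by (rule measure_eq_0_null_sets, rule null_sets_disjoint_unit_interval) auto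

lemma cdf_eq_1: "1 \<le> x \<Longrightarrow> cdf M x = 1"
proof -
  assume "1 \<le> x"
  then have "measure M (UNIV - {..x}) = 0"
    by (intro measure_eq_0_null_sets null_sets_disjoint_unit_interval) auto
  then show ?thesis
    unfolding cdf_def using prob_compl[of "{..x}"] by simp
qed

lemma cdf_0: "cdf M 0 = 0"
proof -
  have "(\<Sum>d\<in>digit_set B. cdf M (- real d)) = (\<Sum>d\<in>digit_set B. if d = 0 then cdf M 0 else 0)"
    by (intro sum.cong) (auto intro: cdf_neg)
  also have "\<dots> \<le> cdf M 0"
    by (simp add: cdf_nonneg)
  finally have "cdf M 0 \<le> cdf M 0 / sum_list B"
    using sum_list_pos by (subst cdf_self_similar) (simp add: divide_right_mono)
  then show ?thesis
    using cdf_nonneg two_le_sum_list by (intro nonneg_le_divide_imp_0) auto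
qed

lemma cdf_nonpos: "x \<le> 0 \<Longrightarrow> cdf M x = 0"
  using cdf_nondecreasing[of x 0] cdf_nonneg[of x] cdf_0 by simp

lemma cdf_digit_point: "cdf M (k / length B) = sum_list (take k B) / sum_list B"
proof -
  have "cdf M (k / length B) = (\<Sum>d\<in>digit_set B. cdf M (real k - real d)) / sum_list B"
    using length_pos by (subst cdf_self_similar) simp
  also have "(\<Sum>d\<in>digit_set B. cdf M (real k - real d)) = (\<Sum>d\<in>digit_set B. if d < k then 1 else 0)"
    by (intro sum.cong) (auto intro: cdf_eq_1 cdf_nonpos)
  also have "\<dots> = card {d \<in> digit_set B. d < k}"
    by (simp add: sum.If_cases Int_def)
  finally show ?thesis
    by (simp add: card_digits_below)
qed

lemma measure_atLeastAtMost_0: "measure M {0..x} = cdf M x"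
proof -
  have "{0..x} = {..x} - {..<0}" by auto
  moreover have "{..<0} \<in> null_sets M"
    by (rule null_sets_disjoint_unit_interval) auto
  ultimately show ?thesis
    unfolding cdf_def by (simp add: measure_Diff_null_set)
qed

end

context digit_ifs
begin

lemma self_similar_measure_unique:
  assumes "self_similar_measure B M1" "self_similar_measure B M2"
  shows "M1 = M2"
proof -
  interpret M1: self_similar B M1 using assms(1) by unfold_locales
  interpret M2: self_similar B M2 using assms(2) by unfold_locales
  define G where "G x = cdf M1 x - cdf M2 x" for x
  have "\<bar>G x\<bar> \<le> 1" for x
    using M1.cdf_nonneg[of x] M2.cdf_nonneg[of x] M1.cdf_bounded_prob[of x] M2.cdf_bounded_prob[of x]
    unfolding G_def abs_le_iff by linarith
  then have "bdd_above (range (\<lambda>x. \<bar>G x\<bar>))"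
    by (intro bdd_aboveI) auto
  moreover have "G y = 0" if "y \<notin> {0..<1}" for y
    using that by (auto simp: G_def M1.cdf_neg M2.cdf_neg M1.cdf_eq_1 M2.cdf_eq_1)
  moreover have "G x = (\<Sum>d\<in>digit_set B. G (real (length B) * x - real d)) / sum_list B" for x
    unfolding G_def
    by (subst M1.cdf_self_similar, subst M2.cdf_self_similar)
      (simp add: sum_subtractf diff_divide_distrib)
  ultimately have "G x = 0" for x
    by (rule self_similar_bounded_function_eq_0)
  then show ?thesis
    by (intro cdf_unique M1.real_distribution_axioms M2.real_distribution_axioms) (auto simp: G_def)
qed

lemma self_similar_measure_exists: "\<exists>M. self_similar_measure B M"
proof
  define \<mu> where "\<mu> = distr (stream_space (measure_pmf (pmf_of_set (digit_set B)))) borel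
    (digit_expansion (length B))"
  have "prob_space \<mu>"
    unfolding \<mu>_def
    by (intro prob_space.prob_space_distr prob_space.prob_space_stream_space prob_space_measure_pmf)
      measurable
  moreover have "emeasure \<mu> A = (\<Sum>d\<in>digit_set B. emeasure \<mu> (ifs_map B d -` A)) / sum_list B"
    if "A \<in> sets borel" for A
    unfolding ifs_map_def card_digit_set[symmetric] \<mu>_def
    using two_le_length digit_set_nonempty digit_set_less_length that
    by (intro self_similar_distr_digit_expansion) auto
  ultimately show "self_similar_measure B \<mu>"
    unfolding self_similar_measure_def by (simp add: \<mu>_def)
qed

lemma self_similar_mu_B: "self_similar_measure B (mu_B B)"
  unfolding mu_B_def
  by (rule theI', rule ex_ex1I[OF self_similar_measure_exists self_similar_measure_unique])

lemma cdf_B_digit_point: "cdf_B B (k / length B) = sum_list (take k B) / sum_list B"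
proof -
  interpret self_similar B "mu_B B"
    by unfold_locales (rule self_similar_mu_B)
  show ?thesis
    unfolding cdf_B_def measure_atLeastAtMost_0 by (rule cdf_digit_point)
qed

end

lemma digit_ifs_if_binary_digit_vector:
  "binary_digit_vector N B \<Longrightarrow> digit_ifs B"
  by (simp add: binary_digit_vector_def digit_ifs_def)

theorem theorem2p1:
  fixes N :: nat and B C :: "nat list"
  assumes "binary_digit_vector N B" and "binary_digit_vector N C"
    and "\<forall>k \<in> {1..N-1}. cdf_B B (real k / real N) = cdf_B C (real k / real N)"
  shows "B = C"
proof -
  interpret B: digit_ifs B using assms(1) by (rule digit_ifs_if_binary_digit_vector)
  interpret C: digit_ifs C using assms(2) by (rule digit_ifs_if_binary_digit_vector)
  have len: "length B = N" "length C = N"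
    using assms(1,2) by (simp_all add: binary_digit_vector_def)
  show ?thesis
  proof (rule list_eq_if_prefix_sums_proportional)
    fix k assume "k \<le> length B"
    then consider "k = 0" | "k = N" | "k \<in> {1..N-1}"
      using len by force
    then show "sum_list (take k B) * sum_list C = sum_list (take k C) * sum_list B"
    proof cases
      case 3
      then have "real (sum_list (take k B)) / sum_list B = real (sum_list (take k C)) / sum_list C"
        using assms(3) B.cdf_B_digit_point[of k] C.cdf_B_digit_point[of k] len by simp
      then have "real (sum_list (take k B) * sum_list C) = real (sum_list (take k C) * sum_list B)"
        using B.sum_list_pos C.sum_list_pos by (simp only: frac_eq_eq less_irrefl of_nat_mult simp_thms)
      then show ?thesis
        by (simp only: of_nat_eq_iff)
    qed (simp_all add: len mult.commute)
  qed (use len B.digits_01 C.digits_01 B.two_le_sum_list C.two_le_sum_list in auto)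
qed

end
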